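(* Let $(m_j)_{j=1}^{\infty}$ be a strictly increasing sequence of positive integers with $m_{j+1}\ge q\,m_j$ for all $j$, where $q\ge 3$. Let $A_j>0$, $B_j\in\mathbb{C}$ with $A_j^2-|B_j|^2=1$, and let $M,N\in\mathbb{N}$ with $M<N$. Define the trigonometric polynomial $b_{M,N}$ as the upper-right entry of $$\prod_{j=M+1}^{N}\begin{bmatrix} A_j & B_j e^{2\pi i m_j t}\\ \overline{B_j}e^{-2\pi i m_j t} & A_j\end{bmatrix}$$ (factors in increasing order of $j$ from left to right), and write $b_{M,N}(t)=\sum_{n\in F}D_n e^{2\pi i n t}$, where $F\subseteq\mathbb{Z}$ is the set of frequencies at which the Fourier coefficient $D_n$ of $b_{M,N}$ is nonzero. Then $$\sum_{n\in\mathbb{Z}}\Big|\sum_{\substack{n_1,n_2\in F\\ n_2-n_1=n}}D_{n_1}\overline{D_{n_2}}\Big|^2\le e^{8\sum_{j=M+1}^{N}|B_j|^2}.$$ *)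

theory Defs
  imports "HOL-Analysis.Analysis"
begin

text \<open>2x2 complex matrices as quadruples (a11, a12, a21, a22).\<close>
type_synonym m2 = "complex \<times> complex \<times> complex \<times> complex"

fun m2_mult :: "m2 \<Rightarrow> m2 \<Rightarrow> m2" where
  "m2_mult (a, b, c, d) (e, f, g, h) =
     (a * e + b * g, a * f + b * h, c * e + d * g, c * f + d * h)"

definition m2_id :: m2 where "m2_id = (1, 0, 0, 1)"

definition upper_right :: "m2 \<Rightarrow> complex" where
  "upper_right X = fst (snd X)"

fun ordered_prod :: "(nat \<Rightarrow> m2) \<Rightarrow> nat \<Rightarrow> nat \<Rightarrow> m2" where
  "ordered_prod P M 0 = m2_id"
| "ordered_prod P M (Suc n) =
     (if Suc n \<le> M then m2_id else m2_mult (ordered_prod P M n) (P (Suc n)))"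

definition factor :: "(nat \<Rightarrow> real) \<Rightarrow> (nat \<Rightarrow> complex) \<Rightarrow> (nat \<Rightarrow> nat) \<Rightarrow> real \<Rightarrow> nat \<Rightarrow> m2" where
  "factor A B m t j =
     (complex_of_real (A j),
      B j * exp (2 * pi * \<i> * of_nat (m j) * t),
      cnj (B j) * exp (- 2 * pi * \<i> * of_nat (m j) * t),
      complex_of_real (A j))"

definition bMN :: "(nat \<Rightarrow> real) \<Rightarrow> (nat \<Rightarrow> complex) \<Rightarrow> (nat \<Rightarrow> nat) \<Rightarrow> nat \<Rightarrow> nat \<Rightarrow> real \<Rightarrow> complex" where
  "bMN A B m M N t = upper_right (ordered_prod (factor A B m t) M N)"

definition fourier_coeff :: "(real \<Rightarrow> complex) \<Rightarrow> int \<Rightarrow> complex" where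
  "fourier_coeff f n = integral {0..1} (\<lambda>t. f t * exp (- 2 * pi * \<i> * of_int n * t))"

end

theory Submission
  imports Defs
begin

text \<open>
  Write the product of the factors with indices \<open>M+1, ..., k\<close> as
  \<open>[[a\<^sub>k, b\<^sub>k], [cnj b\<^sub>k, cnj a\<^sub>k]]\<close>. Lacunarity with ratio 3 confines the spectrum of
  \<open>a\<^sub>k\<close> to \<open>(-m(k+1)/3, 0]\<close> and that of \<open>b\<^sub>k\<close> to \<open>(0, m(k+1)/3]\<close>. The energy
  \<open>U\<^sub>k = |a\<^sub>k|\<^sup>2 + |b\<^sub>k|\<^sup>2\<close> satisfies \<open>U\<^sub>k\<^sub>+\<^sub>1 = (1 + 2|B\<^sub>k\<^sub>+\<^sub>1|\<^sup>2) U\<^sub>k + 4 A\<^sub>k\<^sub>+\<^sub>1 Re X\<^sub>k\<close>,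
  where the cross term \<open>X\<^sub>k\<close> has spectrum above \<open>m(k+1)/3\<close>. Squaring and integrating over a
  period kills the mixed terms, and AM-GM bounds \<open>|X\<^sub>k|\<^sup>2\<close> by \<open>|B\<^sub>k\<^sub>+\<^sub>1|\<^sup>2 U\<^sub>k\<^sup>2 / 4\<close>, which
  gives \<open>\<integral> U\<^sub>k\<^sub>+\<^sub>1\<^sup>2 \<le> exp (8 |B\<^sub>k\<^sub>+\<^sub>1|\<^sup>2) \<integral> U\<^sub>k\<^sup>2\<close>. The left-hand side of the theorem is the
  sum of the squared Fourier coefficients of \<open>|b\<^sub>N|\<^sup>2\<close>, i.e. \<open>\<integral> |b\<^sub>N|\<^sup>4\<close> by Parseval, and
  \<open>|b\<^sub>N|\<^sup>4 \<le> U\<^sub>N\<^sup>2\<close>.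
\<close>

definition circle_char :: "int \<Rightarrow> real \<Rightarrow> complex" where
  "circle_char n t = exp (2 * pi * \<i> * of_int n * t)"

lemma circle_char_0 [simp]: "circle_char 0 t = 1"
  by (simp add: circle_char_def)

lemma circle_char_add: "circle_char (n + k) t = circle_char n t * circle_char k t"
  unfolding circle_char_def by (simp add: distrib_left distrib_right exp_add)

lemma cnj_circle_char: "cnj (circle_char n t) = circle_char (- n) t"
  unfolding circle_char_def by (simp add: exp_cnj)

lemma norm_circle_char [simp]: "cmod (circle_char n t) = 1"
  unfolding circle_char_def by (simp add: norm_exp_eq_Re)

lemma continuous_on_circle_char: "continuous_on S (circle_char n)"
  unfolding circle_char_def by (intro continuous_intros)

lemma has_integral_circle_char: "(circle_char n has_integral (if n = 0 then 1 else 0)) {0..1}"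
proof (cases "n = 0")
  case True
  have "circle_char 0 = (\<lambda>_. 1)" by (rule ext) simp
  then show ?thesis
    using True has_integral_const_real[of "1::complex" 0 1] by simp
next
  case False
  define c where "c = 2 * pi * \<i> * of_int n"
  have "c \<noteq> 0" using False by (simp add: c_def)
  have "(circle_char n has_vector_derivative c * circle_char n t) (at t within {0..1})" for t
    unfolding circle_char_def c_def
    by (rule has_vector_derivative_real_field) (auto intro!: derivative_eq_intros)
  then have "((\<lambda>t. c * circle_char n t / c) has_integral
      (circle_char n 1 / c - circle_char n 0 / c)) {0..1}"
    by (intro fundamental_theorem_of_calculus has_vector_derivative_divide) auto
  moreover have "circle_char n 1 = 1" "circle_char n 0 = 1"
    using exp_integer_2pi[of "of_int n"] by (simp_all add: circle_char_def mult_ac)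
  ultimately show ?thesis using \<open>c \<noteq> 0\<close> False by simp
qed

text \<open>The set \<open>S\<close> only has to contain the spectrum of \<open>f\<close>; coefficients on \<open>S\<close> may vanish.\<close>
definition trig_poly :: "int set \<Rightarrow> (real \<Rightarrow> complex) \<Rightarrow> bool" where
  "trig_poly S f \<longleftrightarrow> finite S \<and> (\<exists>c. \<forall>t. f t = (\<Sum>n\<in>S. c n * circle_char n t))"

lemma trig_poly_zero: "trig_poly {} (\<lambda>t. 0)"
  by (simp add: trig_poly_def)

lemma trig_poly_const: "trig_poly {0} (\<lambda>t. c)"
  unfolding trig_poly_def by (intro conjI exI[of _ "\<lambda>_. c"]) simp_all

lemma trig_poly_circle_char: "trig_poly {n} (circle_char n)"
  unfolding trig_poly_def by (intro conjI exI[of _ "\<lambda>_. 1"]) simp_all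

lemma trig_poly_mono:
  assumes "trig_poly S f" "S \<subseteq> T" "finite T"
  shows "trig_poly T f"
proof -
  obtain c where c: "\<And>t. f t = (\<Sum>n\<in>S. c n * circle_char n t)"
    using assms(1) by (auto simp: trig_poly_def)
  have "f t = (\<Sum>n\<in>T. (if n \<in> S then c n else 0) * circle_char n t)" for t
    unfolding c using assms(2,3) by (intro sum.mono_neutral_cong_left) auto
  then show ?thesis using assms(3) by (auto simp: trig_poly_def)
qed

lemma trig_poly_add:
  assumes "trig_poly S f" "trig_poly T g"
  shows "trig_poly (S \<union> T) (\<lambda>t. f t + g t)"
proof -
  have fin: "finite (S \<union> T)" using assms by (simp add: trig_poly_def)
  obtain c d where
    c: "\<And>t. f t = (\<Sum>n\<in>S \<union> T. c n * circle_char n t)" and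
    d: "\<And>t. g t = (\<Sum>n\<in>S \<union> T. d n * circle_char n t)"
    using trig_poly_mono[OF assms(1) _ fin] trig_poly_mono[OF assms(2) _ fin]
    by (auto simp: trig_poly_def)
  have "f t + g t = (\<Sum>n\<in>S \<union> T. (c n + d n) * circle_char n t)" for t
    unfolding c d by (simp add: sum.distrib distrib_right)
  then show ?thesis using fin by (auto simp: trig_poly_def)
qed

lemma trig_poly_cmult:
  assumes "trig_poly S f"
  shows "trig_poly S (\<lambda>t. k * f t)"
proof -
  obtain c where c: "\<And>t. f t = (\<Sum>n\<in>S. c n * circle_char n t)"
    using assms by (auto simp: trig_poly_def)
  have "k * f t = (\<Sum>n\<in>S. (k * c n) * circle_char n t)" for t
    unfolding c by (simp add: sum_distrib_left mult.assoc)
  then show ?thesis using assms by (auto simp: trig_poly_def)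
qed

lemma trig_poly_mult:
  assumes "trig_poly S f" "trig_poly T g"
  shows "trig_poly (S + T) (\<lambda>t. f t * g t)"
proof -
  have fin: "finite S" "finite T" using assms by (auto simp: trig_poly_def)
  obtain c d where
    c: "\<And>t. f t = (\<Sum>n\<in>S. c n * circle_char n t)" and
    d: "\<And>t. g t = (\<Sum>n\<in>T. d n * circle_char n t)"
    using assms by (auto simp: trig_poly_def)
  define sum_pair where "sum_pair = (\<lambda>p::int \<times> int. fst p + snd p)"
  define e where "e s = (\<Sum>p\<in>{p \<in> S \<times> T. sum_pair p = s}. c (fst p) * d (snd p))" for s
  have "sum_pair ` (S \<times> T) = S + T"
    unfolding sum_pair_def set_plus_image by (simp add: case_prod_beta')
  have "f t * g t = (\<Sum>s\<in>S + T. e s * circle_char s t)" for t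
  proof -
    have "f t * g t = (\<Sum>p\<in>S \<times> T. c (fst p) * d (snd p) * circle_char (sum_pair p) t)"
      unfolding c d sum_product sum.cartesian_product sum_pair_def
      by (auto simp: circle_char_add mult_ac intro!: sum.cong)
    also have "\<dots> = (\<Sum>s\<in>sum_pair ` (S \<times> T).
        \<Sum>p\<in>{p \<in> S \<times> T. sum_pair p = s}. c (fst p) * d (snd p) * circle_char (sum_pair p) t)"
      using fin by (intro sum.image_gen) auto
    also have "\<dots> = (\<Sum>s\<in>S + T. e s * circle_char s t)"
      unfolding e_def sum_distrib_right \<open>sum_pair ` (S \<times> T) = S + T\<close>
      by (auto intro!: sum.cong)
    finally show ?thesis .
  qed
  then show ?thesis using fin by (auto simp: trig_poly_def finite_set_plus)
qed

lemma trig_poly_cnj: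
  assumes "trig_poly S f"
  shows "trig_poly (uminus ` S) (\<lambda>t. cnj (f t))"
proof -
  obtain c where c: "\<And>t. f t = (\<Sum>n\<in>S. c n * circle_char n t)"
    using assms by (auto simp: trig_poly_def)
  have "cnj (f t) = (\<Sum>n\<in>uminus ` S. cnj (c (- n)) * circle_char n t)" for t
    unfolding c by (subst sum.reindex) (auto simp: inj_on_def cnj_circle_char)
  then show ?thesis using assms by (auto simp: trig_poly_def)
qed

lemma continuous_on_trig_poly:
  assumes "trig_poly S f"
  shows "continuous_on X f"
proof -
  obtain c where "f = (\<lambda>t. \<Sum>n\<in>S. c n * circle_char n t)"
    using assms by (auto simp: trig_poly_def)
  then show ?thesis by (auto intro!: continuous_intros continuous_on_circle_char)
qed

lemma has_integral_sum_circle_chars: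
  assumes "finite S"
  shows "((\<lambda>t. \<Sum>n\<in>S. c n * circle_char n t) has_integral (if 0 \<in> S then c 0 else 0)) {0..1}"
proof -
  have "((\<lambda>t. \<Sum>n\<in>S. c n * circle_char n t) has_integral
      (\<Sum>n\<in>S. c n * (if n = 0 then 1 else 0))) {0..1}"
    by (intro has_integral_sum assms has_integral_mult_right has_integral_circle_char)
  also have "(\<Sum>n\<in>S. c n * (if n = 0 then 1 else 0)) = (if 0 \<in> S then c 0 else 0)"
    using assms by (simp add: if_distrib cong: if_cong)
  finally show ?thesis .
qed

lemma trig_poly_has_integral_0:
  assumes "trig_poly S f" "0 \<notin> S"
  shows "(f has_integral 0) {0..1}"
proof -
  obtain c where "f = (\<lambda>t. \<Sum>n\<in>S. c n * circle_char n t)"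
    using assms by (auto simp: trig_poly_def)
  then show ?thesis
    using has_integral_sum_circle_chars[of S c] assms by (simp add: trig_poly_def)
qed

lemma fourier_coeff_sum_circle_chars:
  assumes "finite S"
  shows "fourier_coeff (\<lambda>t. \<Sum>k\<in>S. c k * circle_char k t) n = (if n \<in> S then c n else 0)"
proof -
  have "(\<Sum>k\<in>S. c k * circle_char k t) * exp (- 2 * pi * \<i> * of_int n * t)
      = (\<Sum>k\<in>(\<lambda>k. k - n) ` S. c (k + n) * circle_char k t)" for t
  proof -
    have "exp (- 2 * pi * \<i> * of_int n * t) = circle_char (- n) t"
      by (simp add: circle_char_def)
    then show ?thesis
      by (simp add: sum.reindex inj_on_def sum_distrib_right circle_char_add[symmetric] mult.assoc)
  qed
  moreover have "0 \<in> (\<lambda>k. k - n) ` S \<longleftrightarrow> n \<in> S" by force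
  ultimately show ?thesis
    unfolding fourier_coeff_def
    using has_integral_sum_circle_chars[of "(\<lambda>k. k - n) ` S" "\<lambda>k. c (k + n)"] assms
    by (simp add: integral_unique)
qed

lemma has_integral_norm_sum_circle_chars:
  assumes "finite S"
  shows "((\<lambda>t. (cmod (\<Sum>n\<in>S. c n * circle_char n t))\<^sup>2) has_integral
            (\<Sum>n\<in>S. (cmod (c n))\<^sup>2)) {0..1}"
proof -
  have expand: "complex_of_real ((cmod (\<Sum>n\<in>S. c n * circle_char n t))\<^sup>2)
      = (\<Sum>x\<in>S. \<Sum>y\<in>S. c x * cnj (c y) * circle_char (x - y) t)" for t
    unfolding complex_norm_square sum_product cnj_sum
    by (intro sum.cong refl)
       (simp add: cnj_circle_char circle_char_add[of _ "- _", simplified] mult_ac)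
  have "((\<lambda>t. \<Sum>x\<in>S. \<Sum>y\<in>S. c x * cnj (c y) * circle_char (x - y) t) has_integral
      (\<Sum>x\<in>S. \<Sum>y\<in>S. c x * cnj (c y) * (if x - y = 0 then 1 else 0))) {0..1}"
    by (intro has_integral_sum assms has_integral_mult_right has_integral_circle_char)
  also have "(\<Sum>x\<in>S. \<Sum>y\<in>S. c x * cnj (c y) * (if x - y = 0 then 1 else 0))
      = (\<Sum>x\<in>S. c x * cnj (c x))"
    using assms by (simp add: if_distrib cong: if_cong)
  also have "\<dots> = complex_of_real (\<Sum>n\<in>S. (cmod (c n))\<^sup>2)"
    by (simp only: of_real_sum complex_norm_square)
  finally show ?thesis
    unfolding expand[symmetric] by (auto dest: has_integral_Re)
qed

lemma trig_poly_fourier_expansion: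
  assumes "trig_poly S f"
  shows "finite {n. fourier_coeff f n \<noteq> 0}"
    and "f t = (\<Sum>n | fourier_coeff f n \<noteq> 0. fourier_coeff f n * circle_char n t)"
proof -
  obtain c where c: "f = (\<lambda>t. \<Sum>n\<in>S. c n * circle_char n t)" and "finite S"
    using assms by (auto simp: trig_poly_def)
  then have coeff: "fourier_coeff f n = (if n \<in> S then c n else 0)" for n
    by (simp add: fourier_coeff_sum_circle_chars)
  then have sub: "{n. fourier_coeff f n \<noteq> 0} \<subseteq> S" by auto
  then show "finite {n. fourier_coeff f n \<noteq> 0}" using \<open>finite S\<close> by (rule finite_subset)
  have "f t = (\<Sum>n\<in>S. fourier_coeff f n * circle_char n t)"
    unfolding coeff by (simp add: c)
  also have "\<dots> = (\<Sum>n | fourier_coeff f n \<noteq> 0. fourier_coeff f n * circle_char n t)"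
    using \<open>finite S\<close> sub by (intro sum.mono_neutral_right) auto
  finally show "f t = (\<Sum>n | fourier_coeff f n \<noteq> 0. fourier_coeff f n * circle_char n t)" .
qed

definition autocorrelation :: "(int \<Rightarrow> complex) \<Rightarrow> int set \<Rightarrow> int \<Rightarrow> complex" where
  "autocorrelation D F n =
     (\<Sum>(n1, n2) \<in> {(n1, n2). n1 \<in> F \<and> n2 \<in> F \<and> n2 - n1 = n}. D n1 * cnj (D n2))"

lemma autocorrelation_eq_0:
  assumes "- n \<notin> F + uminus ` F"
  shows "autocorrelation D F n = 0"
proof -
  have no_pairs: "{(n1, n2). n1 \<in> F \<and> n2 \<in> F \<and> n2 - n1 = n} = {}"
    using assms by (auto simp: set_plus_def; blast)
  show ?thesis unfolding autocorrelation_def no_pairs by simp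
qed

lemma norm_square_sum_circle_chars:
  assumes "finite F"
  shows "complex_of_real ((cmod (\<Sum>n\<in>F. D n * circle_char n t))\<^sup>2)
           = (\<Sum>n\<in>F + uminus ` F. autocorrelation D F (- n) * circle_char n t)"
proof -
  define diff where "diff = (\<lambda>p::int \<times> int. fst p - snd p)"
  have diffs: "diff ` (F \<times> F) = F + uminus ` F"
    by (auto simp: diff_def set_plus_def image_iff) blast+
  have fibre: "{(n1, n2). n1 \<in> F \<and> n2 \<in> F \<and> n2 - n1 = - n} = {p \<in> F \<times> F. diff p = n}" for n
    by (auto simp: diff_def)
  have "complex_of_real ((cmod (\<Sum>n\<in>F. D n * circle_char n t))\<^sup>2)
      = (\<Sum>p\<in>F \<times> F. D (fst p) * cnj (D (snd p)) * circle_char (diff p) t)"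
    unfolding complex_norm_square sum_product cnj_sum sum.cartesian_product diff_def
    by (intro sum.cong refl)
       (auto simp: cnj_circle_char circle_char_add[of _ "- _", simplified] mult_ac)
  also have "\<dots> = (\<Sum>n\<in>diff ` (F \<times> F).
      \<Sum>p\<in>{p \<in> F \<times> F. diff p = n}. D (fst p) * cnj (D (snd p)) * circle_char (diff p) t)"
    using assms by (intro sum.image_gen) auto
  also have "\<dots> = (\<Sum>n\<in>F + uminus ` F. autocorrelation D F (- n) * circle_char n t)"
    unfolding diffs autocorrelation_def fibre sum_distrib_right
    by (auto simp: case_prod_beta intro!: sum.cong)
  finally show ?thesis .
qed

lemma infsum_norm_autocorrelation:
  assumes "finite F"
  shows "(\<Sum>\<^sub>\<infinity>n. (cmod (autocorrelation D F n))\<^sup>2)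
           = integral {0..1} (\<lambda>t. (cmod (\<Sum>n\<in>F. D n * circle_char n t)) ^ 4)"
proof -
  define \<Delta> where "\<Delta> = F + uminus ` F"
  have "finite \<Delta>" using assms by (simp add: \<Delta>_def finite_set_plus)
  have "(\<Sum>\<^sub>\<infinity>n. (cmod (autocorrelation D F n))\<^sup>2)
      = (\<Sum>\<^sub>\<infinity>n\<in>uminus ` \<Delta>. (cmod (autocorrelation D F n))\<^sup>2)"
    by (intro infsum_cong_neutral) (auto simp: \<Delta>_def intro: autocorrelation_eq_0 rev_image_eqI)
  also have "\<dots> = (\<Sum>n\<in>uminus ` \<Delta>. (cmod (autocorrelation D F n))\<^sup>2)"
    using \<open>finite \<Delta>\<close> by simp
  also have "\<dots> = (\<Sum>n\<in>\<Delta>. (cmod (autocorrelation D F (- n)))\<^sup>2)"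
    by (simp add: sum.reindex inj_on_def)
  also have "\<dots> = integral {0..1} (\<lambda>t. (cmod (\<Sum>n\<in>\<Delta>. autocorrelation D F (- n) * circle_char n t))\<^sup>2)"
    using has_integral_norm_sum_circle_chars[OF \<open>finite \<Delta>\<close>, of "\<lambda>n. autocorrelation D F (- n)"]
    by (rule integral_unique[symmetric])
  also have "\<dots> = integral {0..1} (\<lambda>t. (cmod (\<Sum>n\<in>F. D n * circle_char n t)) ^ 4)"
    unfolding \<Delta>_def norm_square_sum_circle_chars[OF assms, symmetric] norm_of_real
    by simp
  finally show ?thesis .
qed

definition conj_pair_matrix :: "complex \<Rightarrow> complex \<Rightarrow> m2" where
  "conj_pair_matrix a b = (a, b, cnj b, cnj a)"

lemma m2_mult_conj_pair_matrix:
  "m2_mult (conj_pair_matrix a b) (conj_pair_matrix c d)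
     = conj_pair_matrix (a * c + b * cnj d) (a * d + b * cnj c)"
  by (simp add: conj_pair_matrix_def algebra_simps)

lemma factor_eq_conj_pair_matrix:
  "factor A B m t j = conj_pair_matrix (A j) (B j * circle_char (m j) t)"
  by (simp add: factor_def conj_pair_matrix_def circle_char_def exp_cnj)

lemma norm_square_add_conj_pair:
  fixes A :: real and a b w :: complex
  shows "(cmod (A * a + cnj w * b))\<^sup>2 + (cmod (w * a + A * b))\<^sup>2
           = (A\<^sup>2 + (cmod w)\<^sup>2) * ((cmod a)\<^sup>2 + (cmod b)\<^sup>2) + 4 * A * Re (w * a * cnj b)"
  unfolding cmod_power2 by (simp add: power2_eq_square algebra_simps)

lemma Re_square_eq: "(Re z)\<^sup>2 = ((cmod z)\<^sup>2 + Re (z\<^sup>2)) / 2"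
  by (simp add: cmod_power2 Re_power2)

lemma quadratic_le_exp:
  fixes x :: real
  assumes "0 \<le> x"
  shows "1 + 6 * x + 6 * x\<^sup>2 \<le> exp (8 * x)"
proof -
  have "1 + 6 * x + 6 * x\<^sup>2 \<le> (1 + 4 * x)\<^sup>2"
    using assms by (simp add: power2_eq_square algebra_simps)
  also have "\<dots> \<le> (exp (4 * x))\<^sup>2"
    using assms by (intro power_mono exp_ge_add_one_self) auto
  also have "\<dots> = exp (8 * x)"
    by (simp flip: exp_double)
  finally show ?thesis .
qed

locale lacunary_product =
  fixes A :: "nat \<Rightarrow> real" and B :: "nat \<Rightarrow> complex" and m :: "nat \<Rightarrow> nat" and M :: nat
  assumes lacunary: "\<And>j. M < j \<Longrightarrow> 3 * m j \<le> m (Suc j)"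
    and first_freq_pos: "0 < m (Suc M)"
    and hyperbolic: "\<And>j. M < j \<Longrightarrow> (A j)\<^sup>2 - (cmod (B j))\<^sup>2 = 1"
begin

definition a_entry :: "nat \<Rightarrow> real \<Rightarrow> complex" where
  "a_entry k t = fst (ordered_prod (factor A B m t) M k)"

definition b_entry :: "nat \<Rightarrow> real \<Rightarrow> complex" where
  "b_entry k t = upper_right (ordered_prod (factor A B m t) M k)"

lemma ordered_prod_factor:
  "ordered_prod (factor A B m t) M k = conj_pair_matrix (a_entry k t) (b_entry k t)"
proof -
  have id: "m2_id = conj_pair_matrix 1 0"
    by (simp add: m2_id_def conj_pair_matrix_def)
  have "\<exists>a b. ordered_prod (factor A B m t) M k = conj_pair_matrix a b"
  proof (induction k)
    case 0
    show ?case using id by auto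
  next
    case (Suc k)
    then obtain a b where "ordered_prod (factor A B m t) M k = conj_pair_matrix a b" by blast
    then show ?case
      using id by (auto simp: factor_eq_conj_pair_matrix[of A B m t "Suc k"] m2_mult_conj_pair_matrix)
  qed
  then show ?thesis
    by (auto simp: a_entry_def b_entry_def upper_right_def conj_pair_matrix_def)
qed

lemma a_entry_M [simp]: "a_entry M t = 1" and b_entry_M [simp]: "b_entry M t = 0"
proof -
  have "ordered_prod P M k = m2_id" if "k \<le> M" for P k
    using that by (induction k) auto
  then show "a_entry M t = 1" "b_entry M t = 0"
    by (simp_all add: a_entry_def b_entry_def upper_right_def m2_id_def)
qed

lemma entries_Suc:
  fixes t :: real
  assumes "M \<le> k"
  defines "w \<equiv> B (Suc k) * circle_char (m (Suc k)) t"
  shows "a_entry (Suc k) t = A (Suc k) * a_entry k t + cnj w * b_entry k t"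
    and "b_entry (Suc k) t = w * a_entry k t + A (Suc k) * b_entry k t"
  using ordered_prod_factor[of t "Suc k"] assms
  by (simp_all add: ordered_prod_factor factor_eq_conj_pair_matrix m2_mult_conj_pair_matrix
      conj_pair_matrix_def mult_ac)

lemma entry_spectra:
  assumes "M \<le> k"
  obtains Sa Sb where "trig_poly Sa (a_entry k)" "trig_poly Sb (b_entry k)"
    and "\<forall>f\<in>Sa. f \<le> 0 \<and> - 3 * f < int (m (Suc k))"
    and "\<forall>f\<in>Sb. 0 < f \<and> 3 * f \<le> int (m (Suc k))"
proof -
  have "\<exists>Sa Sb. trig_poly Sa (a_entry k) \<and> trig_poly Sb (b_entry k) \<and>
      (\<forall>f\<in>Sa. f \<le> 0 \<and> - 3 * f < int (m (Suc k))) \<and> (\<forall>f\<in>Sb. 0 < f \<and> 3 * f \<le> int (m (Suc k)))"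
    using assms
  proof (induction k rule: dec_induct)
    case base
    have "a_entry M = (\<lambda>t. 1)" "b_entry M = (\<lambda>t. 0)" by auto
    then have "trig_poly {0} (a_entry M)" "trig_poly {} (b_entry M)"
      using trig_poly_const[of 1] trig_poly_zero by simp_all
    moreover have "\<forall>f\<in>{0}. f \<le> 0 \<and> - 3 * f < int (m (Suc M))"
      using first_freq_pos by simp
    ultimately show ?case by blast
  next
    case (step k)
    then obtain Sa Sb where a: "trig_poly Sa (a_entry k)" and b: "trig_poly Sb (b_entry k)"
      and Sa: "\<forall>f\<in>Sa. f \<le> 0 \<and> - 3 * f < int (m (Suc k))"
      and Sb: "\<forall>f\<in>Sb. 0 < f \<and> 3 * f \<le> int (m (Suc k))" by blast
    define \<mu> where "\<mu> = int (m (Suc k))"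
    have "a_entry (Suc k) = (\<lambda>t. A (Suc k) * a_entry k t
        + cnj (B (Suc k)) * (circle_char (- \<mu>) t * b_entry k t))"
      "b_entry (Suc k) = (\<lambda>t. B (Suc k) * (circle_char \<mu> t * a_entry k t)
        + A (Suc k) * b_entry k t)"
      using entries_Suc[OF \<open>M \<le> k\<close>] by (auto simp: \<mu>_def cnj_circle_char mult_ac)
    then have "trig_poly (Sa \<union> ({- \<mu>} + Sb)) (a_entry (Suc k))"
      "trig_poly (({\<mu>} + Sa) \<union> Sb) (b_entry (Suc k))"
      by (auto intro!: trig_poly_add trig_poly_cmult trig_poly_mult a b trig_poly_circle_char)
    moreover have "3 * \<mu> \<le> int (m (Suc (Suc k)))"
      using lacunary[of "Suc k"] step(1) by (simp add: \<mu>_def)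
    then have "\<forall>f\<in>Sa \<union> ({- \<mu>} + Sb). f \<le> 0 \<and> - 3 * f < int (m (Suc (Suc k)))"
      "\<forall>f\<in>({\<mu>} + Sa) \<union> Sb. 0 < f \<and> 3 * f \<le> int (m (Suc (Suc k)))"
      using Sa Sb by (auto elim!: set_plus_elim simp: \<mu>_def)
    ultimately show ?case by blast
  qed
  then show thesis using that by blast
qed

definition energy :: "nat \<Rightarrow> real \<Rightarrow> real" where
  "energy k t = (cmod (a_entry k t))\<^sup>2 + (cmod (b_entry k t))\<^sup>2"

definition cross :: "nat \<Rightarrow> real \<Rightarrow> complex" where
  "cross k t = B (Suc k) * circle_char (m (Suc k)) t * a_entry k t * cnj (b_entry k t)"

lemma energy_M [simp]: "energy M t = 1"
  by (simp add: energy_def)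

lemma energy_Suc:
  assumes "M \<le> k"
  shows "energy (Suc k) t
           = (1 + 2 * (cmod (B (Suc k)))\<^sup>2) * energy k t + 4 * A (Suc k) * Re (cross k t)"
proof -
  have "(A (Suc k))\<^sup>2 = 1 + (cmod (B (Suc k)))\<^sup>2"
    using hyperbolic[of "Suc k"] assms by simp
  then show ?thesis
    unfolding energy_def cross_def entries_Suc[OF assms] norm_square_add_conj_pair
    by (simp add: norm_mult mult_ac)
qed

lemma norm_cross_square_le: "(cmod (cross k t))\<^sup>2 \<le> (cmod (B (Suc k)))\<^sup>2 * (energy k t)\<^sup>2 / 4"
proof -
  have am_gm: "4 * (cmod (a_entry k t) * cmod (b_entry k t))\<^sup>2 \<le> (energy k t)\<^sup>2"
    using zero_le_power2[of "(cmod (a_entry k t))\<^sup>2 - (cmod (b_entry k t))\<^sup>2"]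
    unfolding energy_def by (simp add: power2_eq_square algebra_simps)
  have "(cmod (cross k t))\<^sup>2
      = (cmod (B (Suc k)))\<^sup>2 * (cmod (a_entry k t) * cmod (b_entry k t))\<^sup>2"
    by (simp add: cross_def norm_mult power_mult_distrib)
  also have "\<dots> \<le> (cmod (B (Suc k)))\<^sup>2 * ((energy k t)\<^sup>2 / 4)"
    using am_gm by (intro mult_left_mono) auto
  finally show ?thesis by simp
qed

lemma continuous_on_entries:
  assumes "M \<le> k"
  shows "continuous_on S (a_entry k)" and "continuous_on S (b_entry k)"
  using entry_spectra[OF assms] by (metis continuous_on_trig_poly)+

lemma continuous_on_energy:
  assumes "M \<le> k"
  shows "continuous_on S (energy k)"
  unfolding energy_def using continuous_on_entries[OF assms] by (intro continuous_intros)

text \<open>The energy has spectrum in \<open>(-m(k+1)/3, m(k+1)/3)\<close> and the cross term in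
  \<open>(m(k+1)/3, \<infinity>)\<close>, so neither their product nor the square of the cross term has mean value.\<close>
lemma cross_terms_have_integral_0:
  assumes "M \<le> k"
  shows "((\<lambda>t. energy k t * Re (cross k t)) has_integral 0) {0..1}"
    and "((\<lambda>t. Re ((cross k t)\<^sup>2)) has_integral 0) {0..1}"
proof -
  define \<mu> where "\<mu> = int (m (Suc k))"
  obtain Sa Sb where a: "trig_poly Sa (a_entry k)" and b: "trig_poly Sb (b_entry k)"
    and Sa: "\<forall>f\<in>Sa. f \<le> 0 \<and> - 3 * f < \<mu>" and Sb: "\<forall>f\<in>Sb. 0 < f \<and> 3 * f \<le> \<mu>"
    using entry_spectra[OF assms] unfolding \<mu>_def by blast
  define SU where "SU = (Sa + uminus ` Sa) \<union> (Sb + uminus ` Sb)"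
  define SX where "SX = {\<mu>} + Sa + uminus ` Sb"
  have "(\<lambda>t. complex_of_real (energy k t))
      = (\<lambda>t. a_entry k t * cnj (a_entry k t) + b_entry k t * cnj (b_entry k t))"
    by (simp only: energy_def of_real_add complex_norm_square)
  then have U: "trig_poly SU (\<lambda>t. complex_of_real (energy k t))"
    unfolding SU_def by (simp add: trig_poly_add trig_poly_mult trig_poly_cnj a b)
  have "cross k = (\<lambda>t. B (Suc k) * (circle_char \<mu> t * a_entry k t * cnj (b_entry k t)))"
    by (auto simp: cross_def \<mu>_def mult_ac)
  then have X: "trig_poly SX (cross k)"
    unfolding SX_def by (simp add: trig_poly_cmult trig_poly_mult trig_poly_cnj trig_poly_circle_char a b)
  have SU_bound: "- \<mu> < 3 * u" if "u \<in> SU" for u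
    using that unfolding SU_def by (auto elim!: set_plus_elim dest!: bspec[OF Sa] bspec[OF Sb])
  have SX_bound: "\<mu> < 3 * x" if "x \<in> SX" for x
    using that unfolding SX_def by (auto elim!: set_plus_elim dest!: bspec[OF Sa] bspec[OF Sb])
  have "0 \<notin> SU + SX" "0 \<notin> SX + SX"
    using \<mu>_def by (auto elim!: set_plus_elim dest!: SU_bound SX_bound)
  then have "((\<lambda>t. of_real (energy k t) * cross k t) has_integral 0) {0..1}"
    "((\<lambda>t. cross k t * cross k t) has_integral 0) {0..1}"
    using trig_poly_mult[OF U X] trig_poly_mult[OF X X] by (auto intro: trig_poly_has_integral_0)
  from this[THEN has_integral_Re]
  show "((\<lambda>t. energy k t * Re (cross k t)) has_integral 0) {0..1}"
    and "((\<lambda>t. Re ((cross k t)\<^sup>2)) has_integral 0) {0..1}"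
    by (simp_all add: power2_eq_square)
qed

lemma energy_square_has_integral:
  assumes "M \<le> k"
  shows "((\<lambda>t. (energy k t)\<^sup>2) has_integral integral {0..1} (\<lambda>t. (energy k t)\<^sup>2)) {0..1}"
  using continuous_on_energy[OF assms]
  by (intro integrable_integral integrable_continuous_interval continuous_intros)

lemma energy_Suc_square_le:
  assumes "M \<le> k"
  defines "\<beta> \<equiv> (cmod (B (Suc k)))\<^sup>2" and "a \<equiv> A (Suc k)"
  shows "(energy (Suc k) t)\<^sup>2 \<le> (1 + 6 * \<beta> + 6 * \<beta>\<^sup>2) * (energy k t)\<^sup>2
           + 8 * (1 + 2 * \<beta>) * a * (energy k t * Re (cross k t)) + 8 * a\<^sup>2 * Re ((cross k t)\<^sup>2)"
proof -
  have a_sq: "a\<^sup>2 = 1 + \<beta>"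
    using hyperbolic[of "Suc k"] assms by (simp add: a_def \<beta>_def)
  have "(energy (Suc k) t)\<^sup>2 = ((1 + 2 * \<beta>) * energy k t + 4 * a * Re (cross k t))\<^sup>2"
    using energy_Suc[OF assms(1)] by (simp add: a_def \<beta>_def)
  also have "\<dots> = (1 + 2 * \<beta>)\<^sup>2 * (energy k t)\<^sup>2
      + 8 * (1 + 2 * \<beta>) * a * (energy k t * Re (cross k t))
      + 8 * a\<^sup>2 * (cmod (cross k t))\<^sup>2 + 8 * a\<^sup>2 * Re ((cross k t)\<^sup>2)"
    unfolding power2_sum[of "_ * energy k t"] Re_square_eq[of "cross k t"] power_mult_distrib
    by (simp add: algebra_simps)
  also have "8 * a\<^sup>2 * (cmod (cross k t))\<^sup>2 \<le> 8 * a\<^sup>2 * (\<beta> * (energy k t)\<^sup>2 / 4)"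
    using norm_cross_square_le[of k t] by (intro mult_left_mono) (simp_all add: \<beta>_def)
  also have "8 * a\<^sup>2 * (\<beta> * (energy k t)\<^sup>2 / 4) = (2 * \<beta> + 2 * \<beta>\<^sup>2) * (energy k t)\<^sup>2"
    unfolding a_sq by (simp add: power2_eq_square algebra_simps)
  finally show ?thesis
    by (simp add: power2_eq_square algebra_simps)
qed

lemma energy_integral_Suc:
  assumes "M \<le> k"
  shows "integral {0..1} (\<lambda>t. (energy (Suc k) t)\<^sup>2)
           \<le> exp (8 * (cmod (B (Suc k)))\<^sup>2) * integral {0..1} (\<lambda>t. (energy k t)\<^sup>2)"
proof -
  define \<beta> where "\<beta> = (cmod (B (Suc k)))\<^sup>2"
  define I where "I = integral {0..1} (\<lambda>t. (energy k t)\<^sup>2)"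
  have "0 \<le> I"
    using integral_nonneg[of "\<lambda>t. (energy k t)\<^sup>2"] energy_square_has_integral[OF assms]
    by (auto simp: I_def)
  have "((\<lambda>t. (1 + 6 * \<beta> + 6 * \<beta>\<^sup>2) * (energy k t)\<^sup>2
      + 8 * (1 + 2 * \<beta>) * A (Suc k) * (energy k t * Re (cross k t))
      + 8 * (A (Suc k))\<^sup>2 * Re ((cross k t)\<^sup>2)) has_integral
      (1 + 6 * \<beta> + 6 * \<beta>\<^sup>2) * I + 8 * (1 + 2 * \<beta>) * A (Suc k) * 0 + 8 * (A (Suc k))\<^sup>2 * 0) {0..1}"
    unfolding I_def
    using energy_square_has_integral[OF assms] cross_terms_have_integral_0[OF assms]
    by (intro has_integral_add has_integral_mult_right)
  then have "integral {0..1} (\<lambda>t. (energy (Suc k) t)\<^sup>2) \<le> (1 + 6 * \<beta> + 6 * \<beta>\<^sup>2) * I"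
    using has_integral_le[OF energy_square_has_integral[OF le_SucI[OF assms]]]
      energy_Suc_square_le[OF assms] unfolding \<beta>_def by simp
  also have "\<dots> \<le> exp (8 * \<beta>) * I"
    using quadratic_le_exp[of \<beta>] \<open>0 \<le> I\<close> by (intro mult_right_mono) (simp_all add: \<beta>_def)
  finally show ?thesis by (simp add: \<beta>_def I_def)
qed

lemma energy_integral_le:
  assumes "M \<le> k"
  shows "integral {0..1} (\<lambda>t. (energy k t)\<^sup>2) \<le> exp (8 * (\<Sum>j = M + 1..k. (cmod (B j))\<^sup>2))"
  using assms
proof (induction k rule: dec_induct)
  case base
  then show ?case by simp
next
  case (step k)
  have "integral {0..1} (\<lambda>t. (energy (Suc k) t)\<^sup>2)
      \<le> exp (8 * (cmod (B (Suc k)))\<^sup>2) * integral {0..1} (\<lambda>t. (energy k t)\<^sup>2)"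
    by (rule energy_integral_Suc[OF step(1)])
  also have "\<dots> \<le> exp (8 * (cmod (B (Suc k)))\<^sup>2) * exp (8 * (\<Sum>j = M + 1..k. (cmod (B j))\<^sup>2))"
    using step.IH by (rule mult_left_mono) simp
  also have "\<dots> = exp (8 * (\<Sum>j = M + 1..Suc k. (cmod (B j))\<^sup>2))"
    using step(1) by (simp add: sum.cl_ivl_Suc distrib_left exp_add[symmetric])
  finally show ?case .
qed

lemma b_entry_fourth_moment_le:
  assumes "M \<le> k"
  shows "integral {0..1} (\<lambda>t. (cmod (b_entry k t)) ^ 4) \<le> integral {0..1} (\<lambda>t. (energy k t)\<^sup>2)"
proof (rule integral_le)
  show "(\<lambda>t. (cmod (b_entry k t)) ^ 4) integrable_on {0..1}"
    using continuous_on_entries(2)[OF assms]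
    by (intro integrable_continuous_interval continuous_intros)
  show "(\<lambda>t. (energy k t)\<^sup>2) integrable_on {0..1}"
    using energy_square_has_integral[OF assms] by blast
  show "(cmod (b_entry k t)) ^ 4 \<le> (energy k t)\<^sup>2" for t
    using power_mono[of "(cmod (b_entry k t))\<^sup>2" "energy k t" 2]
    by (simp add: energy_def flip: power_mult)
qed

end

theorem lemma3p2:
  fixes m :: "nat \<Rightarrow> nat" and q :: real
    and A :: "nat \<Rightarrow> real" and B :: "nat \<Rightarrow> complex" and M N :: nat
  assumes q: "q \<ge> 3"
    and m_pos: "\<And>j. j \<ge> 1 \<Longrightarrow> m j > 0"
    and m_strict: "\<And>j. j \<ge> 1 \<Longrightarrow> m j < m (Suc j)"
    and m_lacunary: "\<And>j. j \<ge> 1 \<Longrightarrow> real (m (Suc j)) \<ge> q * real (m j)"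
    and A_pos: "\<And>j. j \<ge> 1 \<Longrightarrow> A j > 0"
    and AB: "\<And>j. j \<ge> 1 \<Longrightarrow> (A j)\<^sup>2 - (cmod (B j))\<^sup>2 = 1"
    and MN: "M < N"
  defines "D \<equiv> fourier_coeff (bMN A B m M N)"
  defines "F \<equiv> {n. D n \<noteq> 0}"
  shows "(\<Sum>\<^sub>\<infinity> n::int. (cmod (\<Sum>(n1, n2) \<in> {(n1, n2). n1 \<in> F \<and> n2 \<in> F \<and> n2 - n1 = n}.
              D n1 * cnj (D n2)))\<^sup>2)
         \<le> exp (8 * (\<Sum>j = M + 1..N. (cmod (B j))\<^sup>2))"
proof -
  interpret lacunary_product A B m M
  proof
    fix j assume "M < j"
    have "3 * real (m j) \<le> q * real (m j)"
      using q by (intro mult_right_mono) auto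
    also have "\<dots> \<le> real (m (Suc j))"
      using m_lacunary \<open>M < j\<close> by simp
    finally show "3 * m j \<le> m (Suc j)" by linarith
    show "(A j)\<^sup>2 - (cmod (B j))\<^sup>2 = 1" using AB \<open>M < j\<close> by simp
  next
    show "0 < m (Suc M)" using m_pos by simp
  qed
  have D: "D = fourier_coeff (b_entry N)"
    unfolding D_def by (rule arg_cong[where f = fourier_coeff]) (simp add: bMN_def b_entry_def fun_eq_iff)
  obtain Sb where "trig_poly Sb (b_entry N)"
    using entry_spectra[OF less_imp_le[OF MN]] by blast
  then have "finite F" and expansion: "b_entry N t = (\<Sum>n\<in>F. D n * circle_char n t)" for t
    using trig_poly_fourier_expansion unfolding F_def D by blast+
  have "(\<Sum>\<^sub>\<infinity> n::int. (cmod (\<Sum>(n1, n2) \<in> {(n1, n2). n1 \<in> F \<and> n2 \<in> F \<and> n2 - n1 = n}.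
              D n1 * cnj (D n2)))\<^sup>2) = (\<Sum>\<^sub>\<infinity> n. (cmod (autocorrelation D F n))\<^sup>2)"
    by (simp add: autocorrelation_def)
  also have "\<dots> = integral {0..1} (\<lambda>t. (cmod (b_entry N t)) ^ 4)"
    unfolding infsum_norm_autocorrelation[OF \<open>finite F\<close>] expansion ..
  also have "\<dots> \<le> integral {0..1} (\<lambda>t. (energy N t)\<^sup>2)"
    using MN by (intro b_entry_fourth_moment_le) simp
  also have "\<dots> \<le> exp (8 * (\<Sum>j = M + 1..N. (cmod (B j))\<^sup>2))"
    using MN by (intro energy_integral_le) simp
  finally show ?thesis .
qed

end
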